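(* Let $E$ be a real topological vector space, $\Omega$ a nonempty open subset of $E$, and $f_0,\dots,f_m:\Omega\to\mathbb{R}$ functions. Let $\hat{x}$ be a solution of the problem $$(\mathcal{Q}_1)\qquad \min f_0(x)\quad\text{subject to } x\in\Omega,\ f_i(x)\le0\ \text{for all } i\in\{1,\dots,m\}.$$ Assume: (a) for every $j\in\{i\in\{1,\dots,m\}:f_i(\hat{x})<0\}$, $f_j$ is upper semicontinuous at $\hat{x}$; (b) for every $i\in\{0,\dots,m\}$, $f_i$ is $D^+_M$-differentiable at $\hat{x}$. Then there exist $\lambda^0,\dots,\lambda^m\in\mathbb{R}_+$ such that: (i) $(\lambda^0,\dots,\lambda^m)\neq(0,\dots,0)$; (ii) $\lambda^if_i(\hat{x})=0$ for all $i\in\{1,\dots,m\}$; (iii) $\sum_{i=0}^m\lambda^iD^+_Mf_i(\hat{x})(u)\ge0$ for all $u\in E$. If, in addition, (c) there exists $w\in E$ such that $D^+_Mf_i(\hat{x})(w)<0$ for every $i\in\{1,\dots,m\}$ with $f_i(\hat{x})=0$, then one can take $\lambda^0=1$.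
   Context: For a function $f$ defined on an open set containing $x$ and $u\in E$, the upper Dini derivative is $D^+f(x)(u):=\limsup_{t\to0^+}\frac{f(x+tu)-f(x)}{t}$, with the convention $D^+f(x)(0)=0$. The modified upper Dini derivative is $D^+_Mf(x)(u):=\sup_{w\in E}\{D^+f(x)(u+w)-D^+f(x)(w)\}$. The function $f$ is $D^+_M$-differentiable at $x$ if $D^+_Mf(x)(u)$ and $D^+f(x)(u)$ are finite for every $u\in E$. *)

theory Defs
  imports "HOL-Analysis.Analysis"
begin

definition dini_upper :: "('a::real_vector \<Rightarrow> real) \<Rightarrow> 'a \<Rightarrow> 'a \<Rightarrow> ereal" where
  "dini_upper f x u =
     (if u = 0 then 0
      else Limsup (at_right (0::real)) (\<lambda>t. ereal ((f (x + t *\<^sub>R u) - f x) / t)))"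

definition dini_upper_M :: "('a::real_vector \<Rightarrow> real) \<Rightarrow> 'a \<Rightarrow> 'a \<Rightarrow> ereal" where
  "dini_upper_M f x u = (SUP w. dini_upper f x (u + w) - dini_upper f x w)"

definition dini_M_differentiable :: "('a::real_vector \<Rightarrow> real) \<Rightarrow> 'a \<Rightarrow> bool" where
  "dini_M_differentiable f x \<longleftrightarrow>
     (\<forall>u. \<bar>dini_upper_M f x u\<bar> \<noteq> \<infinity> \<and> \<bar>dini_upper f x u\<bar> \<noteq> \<infinity>)"

definition usc_at_within :: "('a::topological_space \<Rightarrow> real) \<Rightarrow> 'a \<Rightarrow> 'a set \<Rightarrow> bool" where
  "usc_at_within f x S \<longleftrightarrow> (\<forall>e>0. \<forall>\<^sub>F y in at x within S. f y < f x + e)"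

end

theory Submission
  imports Defs
begin

text \<open>If the objective and all binding constraints had negative upper Dini derivative in a
  common direction \<open>u\<close>, a small step from \<open>xhat\<close> along \<open>u\<close> would decrease all of them, while the
  non-binding constraints stay negative by upper semicontinuity; this contradicts optimality.
  So for every \<open>u\<close> one of the finitely many functions \<open>D\<^sup>+\<^sub>M f\<^sub>k(xhat)\<close> (\<open>k\<close> active), which
  dominate \<open>D\<^sup>+ f\<^sub>k(xhat)\<close> and are finite and sublinear, is nonnegative at \<open>u\<close>, and a
  Gordan-type alternative for finitely many sublinear functions produces the multipliers. Under (c) a vanishing
  multiplier of \<open>f\<^sub>0\<close> would make the combination negative at \<open>w\<close>.\<close>

definition sublinear :: "('a::real_vector \<Rightarrow> real) \<Rightarrow> bool" where
  "sublinear p \<longleftrightarrow> (\<forall>u v. p (u + v) \<le> p u + p v) \<and> (\<forall>t>0. \<forall>u. p (t *\<^sub>R u) \<le> t * p u)"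

lemma sublinear_add_scaleR_le:
  assumes "sublinear p" "a > 0" "b > 0"
  shows "p (a *\<^sub>R u + b *\<^sub>R v) \<le> a * p u + b * p v"
proof -
  have "p (a *\<^sub>R u + b *\<^sub>R v) \<le> p (a *\<^sub>R u) + p (b *\<^sub>R v)"
    using assms(1) unfolding sublinear_def by blast
  also have "\<dots> \<le> a * p u + b * p v"
    using assms unfolding sublinear_def by (meson add_mono)
  finally show ?thesis .
qed

lemma sublinear_add_scaled:
  assumes p: "sublinear p" and q: "sublinear q" and c: "c \<ge> 0"
  shows "sublinear (\<lambda>u. p u + c * q u)"
  unfolding sublinear_def
proof (intro conjI allI impI)
  fix u v
  have "p (u + v) \<le> p u + p v" "q (u + v) \<le> q u + q v"
    using p q unfolding sublinear_def by blast+
  then show "p (u + v) + c * q (u + v) \<le> p u + c * q u + (p v + c * q v)"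
    using mult_left_mono[OF _ c] by (fastforce simp: algebra_simps)
next
  fix t :: real and u assume t: "t > 0"
  have "p (t *\<^sub>R u) \<le> t * p u" "q (t *\<^sub>R u) \<le> t * q u"
    using p q t unfolding sublinear_def by blast+
  then show "p (t *\<^sub>R u) + c * q (t *\<^sub>R u) \<le> t * (p u + c * q u)"
    using mult_left_mono[OF _ c] by (fastforce simp: algebra_simps)
qed

lemma sublinear_Max:
  assumes "finite K" "K \<noteq> {}" and sub: "\<forall>k\<in>K. sublinear (p k)"
  shows "sublinear (\<lambda>u. Max ((\<lambda>k. p k u) ` K))"
proof -
  define q where "q u = Max ((\<lambda>k. p k u) ` K)" for u
  have ge: "p k u \<le> q u" if "k \<in> K" for k u
    unfolding q_def using assms that by (intro Max_ge) auto
  have attained: "\<exists>k\<in>K. q u = p k u" for u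
  proof -
    have "q u \<in> (\<lambda>k. p k u) ` K" unfolding q_def using assms by (intro Max_in) auto
    then show ?thesis by auto
  qed
  have "sublinear q"
    unfolding sublinear_def
  proof (intro conjI allI impI)
    fix u v
    obtain k where k: "k \<in> K" "q (u + v) = p k (u + v)" using attained by blast
    have "p k (u + v) \<le> p k u + p k v" using sub k(1) unfolding sublinear_def by blast
    then show "q (u + v) \<le> q u + q v" using k ge[OF k(1), of u] ge[OF k(1), of v] by linarith
  next
    fix t :: real and u assume t: "t > 0"
    obtain k where k: "k \<in> K" "q (t *\<^sub>R u) = p k (t *\<^sub>R u)" using attained by blast
    have "p k (t *\<^sub>R u) \<le> t * p k u" using sub k(1) t unfolding sublinear_def by blast
    also have "\<dots> \<le> t * q u" using ge[OF k(1)] t by (simp add: mult_left_mono)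
    finally show "q (t *\<^sub>R u) \<le> t * q u" using k by simp
  qed
  then show ?thesis unfolding q_def .
qed

text \<open>Perturbing \<open>u\<close> by a small multiple of \<open>v\<close> would make both functions negative.\<close>
lemma sublinear_nonneg_where_other_nonpos:
  assumes p: "sublinear p" and q: "sublinear q" and max: "\<And>u. max (p u) (q u) \<ge> 0"
    and v: "q v < 0" and u: "q u \<le> 0"
  shows "p u \<ge> 0"
proof (rule ccontr)
  assume pu: "\<not> p u \<ge> 0"
  define e where "e = - p u / (\<bar>p v\<bar> + 1)"
  have e: "e > 0" unfolding e_def by (rule divide_pos_pos) (use pu in auto)
  have "e * p v \<le> e * \<bar>p v\<bar>" using e by (simp add: mult_left_mono)
  also have "\<dots> < - p u" using pu by (simp add: e_def field_simps)
  finally have ev: "e * p v < - p u" .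
  have "p (u + e *\<^sub>R v) \<le> p u + e * p v" "q (u + e *\<^sub>R v) \<le> q u + e * q v"
    using sublinear_add_scaleR_le[OF p, of 1 e u v] sublinear_add_scaleR_le[OF q, of 1 e u v] e by simp_all
  moreover have "e * q v < 0" using e v by (simp add: mult_pos_neg)
  ultimately show False using max[of "u + e *\<^sub>R v"] ev u by linarith
qed

lemma sublinear_neg_ratio_le:
  assumes p: "sublinear p" and q: "sublinear q" and p_nonneg: "\<And>u. q u \<le> 0 \<Longrightarrow> p u \<ge> 0"
    and u: "q u > 0" and v: "q v < 0"
  shows "- p u / q u \<le> p v / - q v"
proof -
  have "q ((- q v) *\<^sub>R u + q u *\<^sub>R v) \<le> (- q v) * q u + q u * q v"
    by (rule sublinear_add_scaleR_le[OF q]) (use u v in auto)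
  then have "p ((- q v) *\<^sub>R u + q u *\<^sub>R v) \<ge> 0" by (intro p_nonneg) (simp add: algebra_simps)
  moreover have "p ((- q v) *\<^sub>R u + q u *\<^sub>R v) \<le> (- q v) * p u + q u * p v"
    by (rule sublinear_add_scaleR_le[OF p]) (use u v in auto)
  ultimately show ?thesis using u v by (simp add: field_simps)
qed

lemma sublinear_alternative:
  assumes p: "sublinear p" and q: "sublinear q" and max: "\<And>u. max (p u) (q u) \<ge> 0"
  shows "(\<forall>u. q u \<ge> 0) \<or> (\<exists>t\<ge>0. \<forall>u. p u + t * q u \<ge> 0)"
proof (cases "\<forall>u. q u \<ge> 0")
  case False
  then obtain v0 where v0: "q v0 < 0" by (auto simp: not_le)
  have p_nonneg: "p u \<ge> 0" if "q u \<le> 0" for u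
    using sublinear_nonneg_where_other_nonpos[OF p q max v0 that] .
  define T where "T = {p v / - q v | v. q v < 0}"
  define t where "t = Inf T"
  have T_ne: "T \<noteq> {}" using v0 by (auto simp: T_def)
  have T_nonneg: "x \<ge> 0" if "x \<in> T" for x
    using that by (auto simp: T_def intro!: divide_nonneg_neg p_nonneg)
  have t_le: "t \<le> p v / - q v" if "q v < 0" for v
  proof -
    have "p v / - q v \<in> T" using that by (auto simp: T_def)
    moreover have "bdd_below T" using T_nonneg by (rule bdd_belowI)
    ultimately show ?thesis unfolding t_def by (rule cInf_lower)
  qed
  have t_ge: "- p u / q u \<le> t" if "q u > 0" for u
    unfolding t_def using T_ne
  proof (rule cInf_greatest)
    fix x assume "x \<in> T"
    then obtain v where "q v < 0" "x = p v / - q v" by (auto simp: T_def)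
    then show "- p u / q u \<le> x" using sublinear_neg_ratio_le[OF p q p_nonneg that] by simp
  qed
  have "t \<ge> 0" unfolding t_def using T_ne T_nonneg by (rule cInf_greatest)
  moreover have "p u + t * q u \<ge> 0" for u
  proof -
    consider "q u > 0" | "q u < 0" | "q u = 0" by linarith
    then show ?thesis
    proof cases
      case 1
      have "- p u \<le> t * q u" using t_ge[OF 1] by (subst (asm) pos_divide_le_eq[OF 1])
      then show ?thesis by linarith
    next
      case 2
      then have "t * - q u \<le> p u" using t_le[OF 2] by (subst (asm) pos_le_divide_eq) auto
      then show ?thesis by linarith
    next
      case 3 then show ?thesis using p_nonneg[of u] by simp
    qed
  qed
  ultimately show ?thesis by blast
qed simp

lemma multipliers_absorb_scaled:
  fixes mu :: "'k \<Rightarrow> real"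
  assumes "finite K" "k \<notin> K" "c \<ge> 0" "\<forall>j\<in>K. mu j \<ge> 0" "\<exists>j\<in>K. mu j > 0"
    and "\<forall>u. (\<Sum>j\<in>K. mu j * (p j u + c * p k u)) \<ge> 0"
  shows "\<exists>lam. (\<forall>j\<in>insert k K. lam j \<ge> 0) \<and> (\<exists>j\<in>insert k K. lam j > 0) \<and>
    (\<forall>u. (\<Sum>j\<in>insert k K. lam j * p j u) \<ge> 0)"
proof -
  define lam where "lam j = (if j = k then c * sum mu K else mu j)" for j
  have "(\<Sum>j\<in>insert k K. lam j * p j u) = (\<Sum>j\<in>K. mu j * (p j u + c * p k u))" for u
  proof -
    have "(\<Sum>j\<in>insert k K. lam j * p j u) = c * sum mu K * p k u + (\<Sum>j\<in>K. mu j * p j u)"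
      using assms(1,2) by (simp add: lam_def) (intro sum.cong, auto)
    also have "\<dots> = (\<Sum>j\<in>K. mu j * (p j u + c * p k u))"
      by (simp add: algebra_simps sum.distrib sum_distrib_left sum_distrib_right)
    finally show ?thesis .
  qed
  moreover have "\<forall>j\<in>insert k K. lam j \<ge> 0"
    using assms(2-4) by (auto simp: lam_def intro!: mult_nonneg_nonneg sum_nonneg)
  moreover have "\<exists>j\<in>insert k K. lam j > 0"
    using assms(2,5) by (auto simp: lam_def)
  ultimately show ?thesis using assms(6) by (intro exI[of _ lam]) auto
qed

text \<open>Induction step: the two-function alternative applied to the pointwise maximum of the
  \<open>p j\<close>, \<open>j \<in> K\<close>, and to \<open>p k\<close> either makes \<open>p k\<close> nonnegative or lets a multiple
  \<open>c * p k\<close> be absorbed into every \<open>p j\<close>.\<close>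
lemma gordan_sublinear:
  assumes "finite K" "K \<noteq> {}" "\<forall>k\<in>K. sublinear (p k)" "\<forall>u. \<exists>k\<in>K. p k u \<ge> 0"
  shows "\<exists>lam. (\<forall>k\<in>K. lam k \<ge> 0) \<and> (\<exists>k\<in>K. lam k > 0) \<and> (\<forall>u. (\<Sum>k\<in>K. lam k * p k u) \<ge> 0)"
  using assms
proof (induction K arbitrary: p rule: finite_ne_induct)
  case (singleton k)
  then show ?case by (intro exI[of _ "\<lambda>_. 1"]) auto
next
  case (insert k K)
  define q where "q u = Max ((\<lambda>j. p j u) ` K)" for u
  have "sublinear q" unfolding q_def using insert by (intro sublinear_Max) auto
  moreover have "sublinear (p k)" using insert.prems by auto
  moreover have "max (q u) (p k u) \<ge> 0" for u
  proof -
    obtain j where "j \<in> insert k K" "p j u \<ge> 0" using insert.prems by blast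
    then show ?thesis unfolding q_def using insert.hyps by (auto simp: le_max_iff_disj Max_ge_iff)
  qed
  ultimately consider "\<forall>u. p k u \<ge> 0" | c where "c \<ge> 0" "\<forall>u. q u + c * p k u \<ge> 0"
    using sublinear_alternative by blast
  then show ?case
  proof cases
    case 1
    have "(\<Sum>j\<in>insert k K. (if j = k then 1 else 0) * p j u) = p k u" for u
      using insert.hyps by (simp, intro sum.neutral) auto
    then show ?thesis using 1 by (intro exI[of _ "\<lambda>j. if j = k then 1 else 0"]) auto
  next
    case 2
    have "\<forall>j\<in>K. sublinear (\<lambda>u. p j u + c * p k u)"
      using insert.prems 2 by (auto intro: sublinear_add_scaled)
    moreover have "\<exists>j\<in>K. p j u + c * p k u \<ge> 0" for u
    proof -
      have "- (c * p k u) \<le> Max ((\<lambda>j. p j u) ` K)" using 2(2)[rule_format, of u] unfolding q_def by linarith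
      then obtain j where "j \<in> K" "- (c * p k u) \<le> p j u" using insert.hyps by (auto simp: Max_ge_iff)
      then show ?thesis by (intro bexI[of _ j]) auto
    qed
    ultimately obtain mu where "\<forall>j\<in>K. mu j \<ge> 0" "\<exists>j\<in>K. mu j > 0"
      "\<forall>u. (\<Sum>j\<in>K. mu j * (p j u + c * p k u)) \<ge> 0"
      using insert.IH[of "\<lambda>j u. p j u + c * p k u"] by blast
    then show ?thesis by (rule multipliers_absorb_scaled[OF insert.hyps(1,3) 2(1)])
  qed
qed

lemma multiplier_pos_if_others_negative:
  fixes lam :: "'k \<Rightarrow> real"
  assumes "finite K" and nonneg: "\<forall>k\<in>K. lam k \<ge> 0" and "\<exists>k\<in>K. lam k > 0"
    and "(\<Sum>k\<in>K. lam k * p k w) \<ge> 0" and neg: "\<forall>k\<in>K - {i}. p k w < 0"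
  shows "lam i > 0"
proof (rule ccontr)
  assume i: "\<not> lam i > 0"
  have "(\<Sum>k\<in>K. lam k * p k w) < (\<Sum>k\<in>K. 0)"
  proof (rule sum_strict_mono_ex1[OF \<open>finite K\<close>])
    have "lam k * p k w \<le> 0" if "k \<in> K" for k
    proof (cases "k = i")
      case True
      with nonneg that i have "lam k = 0" by force
      then show ?thesis by simp
    next
      case False
      then have "lam k \<ge> 0" "p k w < 0" using nonneg neg that by auto
      then show ?thesis by (intro mult_nonneg_nonpos) auto
    qed
    then show "\<forall>k\<in>K. lam k * p k w \<le> 0" by blast
    obtain k where "k \<in> K" "lam k > 0" using assms(3) by blast
    moreover have "k \<noteq> i" using calculation i by blast
    ultimately show "\<exists>k\<in>K. lam k * p k w < 0" using neg by (blast intro: mult_pos_neg)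
  qed
  then show False using assms(4) by simp
qed

lemma sublinear_multipliers:
  assumes "finite I" "K \<subseteq> I" "0 \<in> K" "\<forall>k\<in>K. sublinear (p k)" "\<forall>u. \<exists>k\<in>K. p k u \<ge> 0"
  shows "\<exists>lam. (\<forall>i\<in>I. lam i \<ge> 0) \<and> (\<exists>i\<in>I. lam i \<noteq> 0) \<and> (\<forall>i\<in>I - K. lam i = 0) \<and>
    (\<forall>u. (\<Sum>i\<in>I. lam i * p i u) \<ge> 0) \<and> ((\<exists>w. \<forall>k\<in>K - {0}. p k w < 0) \<longrightarrow> lam 0 = 1)"
proof -
  have K: "finite K" "K \<noteq> {}" using assms(1-3) finite_subset by blast+
  then obtain mu where mu: "\<forall>k\<in>K. mu k \<ge> 0" "\<exists>k\<in>K. mu k > 0" "\<forall>u. (\<Sum>k\<in>K. mu k * p k u) \<ge> 0"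
    using gordan_sublinear[OF K assms(4,5)] by blast
  define c where "c = (if \<exists>w. \<forall>k\<in>K - {0}. p k w < 0 then mu 0 else 1)"
  have c: "c > 0"
  proof (cases "\<exists>w. \<forall>k\<in>K - {0}. p k w < 0")
    case True
    then obtain w where "\<forall>k\<in>K - {0}. p k w < 0" by blast
    then have "mu 0 > 0" by (rule multiplier_pos_if_others_negative[OF K(1) mu(1,2) mu(3)[rule_format]])
    moreover have "c = mu 0" unfolding c_def using True by (rule if_P)
    ultimately show ?thesis by simp
  next
    case False
    then have "c = 1" unfolding c_def by (rule if_not_P)
    then show ?thesis by simp
  qed
  define lam where "lam k = (if k \<in> K then mu k / c else 0)" for k
  have "(\<Sum>i\<in>I. lam i * p i u) = (\<Sum>k\<in>K. mu k * p k u) / c" for u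
  proof -
    have "(\<Sum>i\<in>I. lam i * p i u) = (\<Sum>k\<in>K. lam k * p k u)"
      using assms(1,2) by (intro sum.mono_neutral_right) (auto simp: lam_def)
    then show ?thesis by (simp add: lam_def sum_divide_distrib)
  qed
  then have "\<forall>u. (\<Sum>i\<in>I. lam i * p i u) \<ge> 0" using mu(3) c by simp
  moreover have "\<forall>i\<in>I. lam i \<ge> 0" using mu(1) c by (simp add: lam_def)
  moreover have "\<exists>i\<in>I. lam i \<noteq> 0"
  proof -
    obtain k where "k \<in> K" "mu k > 0" using mu(2) by blast
    then show ?thesis using c assms(2) by (intro bexI[of _ k]) (auto simp: lam_def)
  qed
  moreover have "\<forall>i\<in>I - K. lam i = 0" by (simp add: lam_def)
  moreover have "(\<exists>w. \<forall>k\<in>K - {0}. p k w < 0) \<longrightarrow> lam 0 = 1"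
  proof
    assume "\<exists>w. \<forall>k\<in>K - {0}. p k w < 0"
    then have "c = mu 0" unfolding c_def by (rule if_P)
    then show "lam 0 = 1" using c assms(3) by (simp add: lam_def)
  qed
  ultimately show ?thesis by (intro exI[of _ lam]) simp
qed

lemma dini_upper_zero [simp]: "dini_upper f x 0 = 0"
  by (simp add: dini_upper_def)

lemma dini_upper_scaleR:
  fixes f :: "'a::real_vector \<Rightarrow> real"
  assumes t: "t > 0"
  shows "dini_upper f x (t *\<^sub>R u) = ereal t * dini_upper f x u"
proof (cases "u = 0")
  case False
  define h where "h s = ereal ((f (x + s *\<^sub>R u) - f x) / s)" for s
  have "Limsup (at_right 0) (\<lambda>s. ereal ((f (x + s *\<^sub>R (t *\<^sub>R u)) - f x) / s))
      = Limsup (at_right 0) (\<lambda>s. ereal t * h (t * s))"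
    by (rule Limsup_eq, rule eventually_at_rightI[of 0 1]) (use t in \<open>auto simp: h_def mult.commute\<close>)
  also have "\<dots> = ereal t * Limsup (at_right 0) (\<lambda>s. h (t * s))"
    using t by (intro Limsup_ereal_mult_left) auto
  also have "Limsup (at_right 0) (\<lambda>s. h (t * s)) = Limsup (filtermap (times t) (at_right 0)) h"
    by (rule Limsup_filtermap_eq[symmetric]) (use t in \<open>auto simp: inj_def\<close>)
  also have "filtermap (times t) (at_right 0) = at_right (0::real)"
    using filtermap_times_pos_at_right[OF t, of 0] by simp
  finally show ?thesis using False t by (simp add: dini_upper_def h_def)
qed simp

lemma dini_upper_le_dini_upper_M: "dini_upper f x u \<le> dini_upper_M f x u"
  unfolding dini_upper_M_def by (rule SUP_upper2[of 0]) simp_all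

lemma sublinear_SUP_diff:
  fixes d P :: "'a::real_vector \<Rightarrow> real"
  assumes hom: "\<And>t u. t > 0 \<Longrightarrow> d (t *\<^sub>R u) = t * d u"
    and P: "\<And>u. ereal (P u) = (SUP w. ereal (d (u + w) - d w))"
  shows "sublinear P"
proof -
  have upper: "d (u + w) - d w \<le> P u" for u w
  proof -
    have "ereal (d (u + w) - d w) \<le> ereal (P u)" unfolding P by (rule SUP_upper) simp
    then show ?thesis by simp
  qed
  have least: "P u \<le> c" if "\<And>w. d (u + w) - d w \<le> c" for u c
  proof -
    have "ereal (P u) \<le> ereal c" unfolding P by (rule SUP_least) (simp add: that)
    then show ?thesis by simp
  qed
  show ?thesis
    unfolding sublinear_def
  proof (intro conjI allI impI)
    fix u v
    show "P (u + v) \<le> P u + P v"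
    proof (rule least)
      fix w
      have "d (u + v + w) - d w = (d (u + (v + w)) - d (v + w)) + (d (v + w) - d w)"
        by (simp add: add.assoc)
      then show "d (u + v + w) - d w \<le> P u + P v"
        using upper[of u "v + w"] upper[of v w] by linarith
    qed
  next
    fix t :: real and u assume t: "t > 0"
    show "P (t *\<^sub>R u) \<le> t * P u"
    proof (rule least)
      fix w
      have "t *\<^sub>R u + w = t *\<^sub>R (u + w /\<^sub>R t)" "w = t *\<^sub>R (w /\<^sub>R t)"
        using t by (simp_all add: scaleR_add_right)
      then have "d (t *\<^sub>R u + w) - d w = t * (d (u + w /\<^sub>R t) - d (w /\<^sub>R t))"
        using hom[OF t] by (metis right_diff_distrib)
      also have "\<dots> \<le> t * P u" using upper t by (simp add: mult_left_mono)
      finally show "d (t *\<^sub>R u + w) - d w \<le> t * P u" .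
    qed
  qed
qed

lemma dini_M_differentiable_sublinear:
  fixes f :: "'a::real_vector \<Rightarrow> real"
  assumes "dini_M_differentiable f x"
  shows "sublinear (\<lambda>u. real_of_ereal (dini_upper_M f x u))"
proof (rule sublinear_SUP_diff)
  define d where "d u = real_of_ereal (dini_upper f x u)" for u
  have D: "dini_upper f x u = ereal (d u)" for u
    using assms unfolding dini_M_differentiable_def d_def by (metis ereal_real')
  show "d (t *\<^sub>R u) = t * d u" if "t > 0" for t u
    using dini_upper_scaleR[OF that, of f x u] unfolding D by simp
  show "ereal (real_of_ereal (dini_upper_M f x u)) = (SUP w. ereal (d (u + w) - d w))" for u
    using assms unfolding dini_M_differentiable_def dini_upper_M_def D
    by (simp add: ereal_real')
qed

lemma dini_upper_neg_eventually_less: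
  fixes f :: "'a::real_vector \<Rightarrow> real"
  assumes "dini_upper f x u < 0"
  shows "\<forall>\<^sub>F s in at_right 0. f (x + s *\<^sub>R u) < f x"
proof -
  have "u \<noteq> 0" using assms by auto
  then have "\<forall>\<^sub>F s in at_right 0. ereal ((f (x + s *\<^sub>R u) - f x) / s) < 0"
    using assms by (intro Limsup_lessD) (simp add: dini_upper_def)
  moreover have "\<forall>\<^sub>F s in at_right (0::real). s > 0" by (simp add: eventually_at_right_less)
  ultimately show ?thesis
    by eventually_elim (simp add: divide_less_0_iff)
qed

lemma ray_tendsto_at_right:
  fixes x u :: "'a::{real_vector, topological_space}"
  assumes add: "continuous_on UNIV (\<lambda>p::'a \<times> 'a. fst p + snd p)"
    and scale: "continuous_on UNIV (\<lambda>p::real \<times> 'a. fst p *\<^sub>R snd p)"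
  shows "((\<lambda>s. x + s *\<^sub>R u) \<longlongrightarrow> x) (at_right 0)"
proof -
  have "continuous_on UNIV (\<lambda>s::real. s *\<^sub>R u)"
    using continuous_on_compose[OF continuous_on_Pair[OF continuous_on_id continuous_on_const]
        scale[THEN continuous_on_subset]]
    by (simp add: o_def)
  then have "continuous_on UNIV (\<lambda>s::real. x + s *\<^sub>R u)"
    using continuous_on_compose[OF continuous_on_Pair[OF continuous_on_const] add[THEN continuous_on_subset]]
    by (simp add: o_def)
  then have "isCont (\<lambda>s. x + s *\<^sub>R u) 0" by (simp add: continuous_on_eq_continuous_at)
  then have "((\<lambda>s. x + s *\<^sub>R u) \<longlongrightarrow> x) (at 0)" by (simp add: isCont_def)
  then show ?thesis by (rule tendsto_mono[rotated]) (simp add: at_le)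
qed

lemma usc_at_within_eventually_less:
  assumes "usc_at_within f x S" "f x < c"
  shows "\<forall>\<^sub>F y in nhds x. y \<in> S \<longrightarrow> f y < c"
proof -
  have "\<forall>\<^sub>F y in at x within S. f y < c"
    using assms(1)[unfolded usc_at_within_def, rule_format, of "c - f x"] assms(2) by simp
  then show ?thesis
    unfolding eventually_at_filter by eventually_elim (use assms(2) in auto)
qed

lemma eventually_nhds_inactive_constraints:
  assumes "open \<Omega>" "x \<in> \<Omega>" "finite J"
    and usc: "\<forall>j\<in>J. f j x < 0 \<longrightarrow> usc_at_within (f j) x \<Omega>"
  shows "\<forall>\<^sub>F y in nhds x. y \<in> \<Omega> \<and> (\<forall>j\<in>J. f j x < 0 \<longrightarrow> f j y < 0)"
proof -
  have \<Omega>: "\<forall>\<^sub>F y in nhds x. y \<in> \<Omega>" using assms(1,2) by (rule eventually_nhds_in_open)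
  have "\<forall>\<^sub>F y in nhds x. f j x < 0 \<longrightarrow> f j y < 0" if "j \<in> J" for j
  proof (cases "f j x < 0")
    case True
    then have "\<forall>\<^sub>F y in nhds x. y \<in> \<Omega> \<longrightarrow> f j y < 0"
      using usc that by (intro usc_at_within_eventually_less) auto
    with \<Omega> show ?thesis by eventually_elim simp
  qed simp
  with \<Omega> show ?thesis using assms(3) by (simp add: eventually_conj_iff eventually_ball_finite_distrib)
qed

lemma no_common_descent_direction:
  fixes f :: "nat \<Rightarrow> 'a::{real_vector, topological_space} \<Rightarrow> real"
  assumes add: "continuous_on UNIV (\<lambda>p::'a \<times> 'a. fst p + snd p)"
    and scale: "continuous_on UNIV (\<lambda>p::real \<times> 'a. fst p *\<^sub>R snd p)"
    and "open \<Omega>" "xhat \<in> \<Omega>" and feas: "\<forall>i\<in>{1..m}. f i xhat \<le> 0"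
    and opt: "\<forall>x\<in>\<Omega>. (\<forall>i\<in>{1..m}. f i x \<le> 0) \<longrightarrow> f 0 xhat \<le> f 0 x"
    and usc: "\<forall>j\<in>{1..m}. f j xhat < 0 \<longrightarrow> usc_at_within (f j) xhat \<Omega>"
  shows "\<exists>k\<in>insert 0 {i\<in>{1..m}. f i xhat = 0}. dini_upper (f k) xhat u \<ge> 0"
proof (rule ccontr)
  define K where "K = insert 0 {i\<in>{1..m}. f i xhat = 0}"
  assume "\<not> ?thesis"
  then have neg: "\<forall>k\<in>K. dini_upper (f k) xhat u < 0" by (auto simp: K_def)
  have "\<forall>\<^sub>F s in at_right 0. \<forall>k\<in>K. f k (xhat + s *\<^sub>R u) < f k xhat"
    by (intro eventually_ball_finite ballI dini_upper_neg_eventually_less) (use neg in \<open>auto simp: K_def\<close>)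
  moreover have "\<forall>\<^sub>F s in at_right 0. xhat + s *\<^sub>R u \<in> \<Omega> \<and>
      (\<forall>j\<in>{1..m}. f j xhat < 0 \<longrightarrow> f j (xhat + s *\<^sub>R u) < 0)"
    using eventually_nhds_inactive_constraints[OF assms(3,4) finite_atLeastAtMost usc]
      ray_tendsto_at_right[OF add scale] by (rule eventually_compose_filterlim)
  ultimately obtain s where s: "\<forall>k\<in>K. f k (xhat + s *\<^sub>R u) < f k xhat" "xhat + s *\<^sub>R u \<in> \<Omega>"
    "\<forall>j\<in>{1..m}. f j xhat < 0 \<longrightarrow> f j (xhat + s *\<^sub>R u) < 0"
    using eventually_happens'[OF trivial_limit_at_right_real eventually_conj] by blast
  have "f i (xhat + s *\<^sub>R u) \<le> 0" if "i \<in> {1..m}" for i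
  proof (cases "f i xhat = 0")
    case True
    then show ?thesis using s(1) that by (auto simp: K_def)
  next
    case False
    moreover have "f i xhat \<le> 0" using feas that by blast
    ultimately have "f i xhat < 0" by simp
    then have "f i (xhat + s *\<^sub>R u) < 0" using s(3) that by blast
    then show ?thesis by simp
  qed
  then have "f 0 xhat \<le> f 0 (xhat + s *\<^sub>R u)" using opt s(2) by blast
  then show False using s(1) by (simp add: K_def)
qed

theorem theorem3p1:
  fixes f :: "nat \<Rightarrow> 'a::{real_vector, topological_space} \<Rightarrow> real"
    and \<Omega> :: "'a set" and xhat :: 'a and m :: nat
  assumes tvs_add: "continuous_on UNIV (\<lambda>p::'a \<times> 'a. fst p + snd p)"
    and tvs_scale: "continuous_on UNIV (\<lambda>p::real \<times> 'a. fst p *\<^sub>R snd p)"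
    and open_\<Omega>: "open \<Omega>" and ne_\<Omega>: "\<Omega> \<noteq> {}"
    and feas: "xhat \<in> \<Omega>" "\<forall>i\<in>{1..m}. f i xhat \<le> 0"
    and opt: "\<forall>x\<in>\<Omega>. (\<forall>i\<in>{1..m}. f i x \<le> 0) \<longrightarrow> f 0 xhat \<le> f 0 x"
    and a: "\<forall>j\<in>{1..m}. f j xhat < 0 \<longrightarrow> usc_at_within (f j) xhat \<Omega>"
    and b: "\<forall>i\<le>m. dini_M_differentiable (f i) xhat"
  shows "(\<exists>lam :: nat \<Rightarrow> real.
            (\<forall>i\<le>m. lam i \<ge> 0) \<and> (\<exists>i\<le>m. lam i \<noteq> 0) \<and>
            (\<forall>i\<in>{1..m}. lam i * f i xhat = 0) \<and>
            (\<forall>u. (\<Sum>i\<le>m. ereal (lam i) * dini_upper_M (f i) xhat u) \<ge> 0))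
       \<and> ((\<exists>w. \<forall>i\<in>{1..m}. f i xhat = 0 \<longrightarrow> dini_upper_M (f i) xhat w < 0) \<longrightarrow>
          (\<exists>lam :: nat \<Rightarrow> real. lam 0 = 1 \<and>
            (\<forall>i\<le>m. lam i \<ge> 0) \<and> (\<exists>i\<le>m. lam i \<noteq> 0) \<and>
            (\<forall>i\<in>{1..m}. lam i * f i xhat = 0) \<and>
            (\<forall>u. (\<Sum>i\<le>m. ereal (lam i) * dini_upper_M (f i) xhat u) \<ge> 0)))"
proof -
  define P where "P i u = real_of_ereal (dini_upper_M (f i) xhat u)" for i u
  define K where "K = insert 0 {i\<in>{1..m}. f i xhat = 0}"
  have K: "K \<subseteq> {..m}" "0 \<in> K" by (auto simp: K_def)
  have DM: "dini_upper_M (f i) xhat u = ereal (P i u)" if "i \<le> m" for i u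
    using b that unfolding dini_M_differentiable_def P_def by (metis ereal_real')
  have sub: "\<forall>k\<in>K. sublinear (P k)"
    using K(1) b unfolding P_def by (blast intro: dini_M_differentiable_sublinear)
  have nonneg: "\<forall>u. \<exists>k\<in>K. P k u \<ge> 0"
  proof
    fix u
    obtain k where k: "k \<in> K" "dini_upper (f k) xhat u \<ge> 0"
      using no_common_descent_direction[OF tvs_add tvs_scale open_\<Omega> feas opt a] unfolding K_def by blast
    moreover have "k \<le> m" using k(1) K(1) by auto
    ultimately have "ereal (P k u) \<ge> 0"
      using DM dini_upper_le_dini_upper_M[of "f k" xhat u] by (metis order_trans)
    then show "\<exists>k\<in>K. P k u \<ge> 0" using k(1) by auto
  qed
  obtain lam where lam: "\<forall>i\<in>{..m}. lam i \<ge> 0" "\<exists>i\<in>{..m}. lam i \<noteq> 0" "\<forall>i\<in>{..m} - K. lam i = 0"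
    "\<forall>u. (\<Sum>i\<le>m. lam i * P i u) \<ge> 0" "(\<exists>w. \<forall>k\<in>K - {0}. P k w < 0) \<longrightarrow> lam 0 = 1"
    using sublinear_multipliers[OF finite_atMost K sub nonneg] by blast
  have "(\<Sum>i\<le>m. ereal (lam i) * dini_upper_M (f i) xhat u) = ereal (\<Sum>i\<le>m. lam i * P i u)" for u
    by (simp add: DM)
  moreover have "\<forall>i\<in>{1..m}. lam i * f i xhat = 0" using lam(3) by (auto simp: K_def)
  moreover have "(\<exists>w. \<forall>i\<in>{1..m}. f i xhat = 0 \<longrightarrow> dini_upper_M (f i) xhat w < 0) \<longrightarrow> lam 0 = 1"
  proof
    assume "\<exists>w. \<forall>i\<in>{1..m}. f i xhat = 0 \<longrightarrow> dini_upper_M (f i) xhat w < 0"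
    then obtain w where "\<forall>i\<in>{1..m}. f i xhat = 0 \<longrightarrow> dini_upper_M (f i) xhat w < 0" by blast
    then have "\<forall>k\<in>K - {0}. P k w < 0" using DM by (auto simp: K_def)
    then show "lam 0 = 1" using lam(5) by blast
  qed
  ultimately show ?thesis using lam(1,2,4) by (intro conjI impI exI[of _ lam]) auto
qed

end
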